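(* Let $I$ be a $Q$-interval of $\mathcal{P}$ with $D(I)=\{x_1,x_2,\ldots,x_r\}$, listed in the order of the children of the corresponding $Q$-node (so $\max Int(x_i)+1=\min Int(x_{i+1})$). Then $I$ is a $b$-nested common interval if and only if either $Int(x_1)$ is $b$-small and $I\setminus Int(x_1)$ is a $b$-nested common interval, or $Int(x_r)$ is $b$-small and $I\setminus Int(x_r)$ is a $b$-nested common interval.
   Context: Let $n\geq 1$, $K\geq 1$ and let $\mathcal{P}=\{P_1,\ldots,P_K\}$ be permutations of $\{1,\ldots,n\}$ with $P_1=(1,2,\ldots,n)$. For integers $i\leq j$ write $(i..j)=\{i,\ldots,j\}$. A common interval of $\mathcal{P}$ is a set of integers occupying consecutive positions in every $P_k$; all have the form $(i..j)$, and singletons and $(1..n)$ are common. Fix a positive integer $b$. A common interval $I$ is $b$-small if $|I|\leq b$, $b$-large otherwise; it is $b$-nested if $|I|=1$ or $I$ strictly contains a $b$-nested common interval $J$ with $|J|\geq|I|-b$ (recursive on size). Two intervals $(i..j)$, $(k..l)$ overlap if $i<k\leq j<l$ or $k<i\leq l<j$. A common interval is strong if it overlaps no other common interval. The PQ-tree $T$: nodes are the strong common intervals ($Int(x)$ is the interval of node $x$), root $(1..n)$, leaves the singletons, parent of $y$ is the node whose interval is the smallest strong common interval strictly containing $Int(y)$. A node $x$ with children set $D$ is a $P$-node if no union $\bigcup_{z\in D'}Int(z)$, $D'\subset D$, $2\leq|D'|<|D|$, is common; otherwise it is a $Q$-node with children ordered $y_1,\ldots,y_r$ so that $\max Int(y_i)+1=\min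 Int(y_{i+1})$. It is known that a set is a common interval iff it is $Int(x)$ for a node $x$ or the union of the intervals of consecutive children of a unique $Q$-node. The domain $D(I)$ of a common interval $I$ is the set of children of $x$ if $I=Int(x)$ is strong, and otherwise the set of consecutive children of the $Q$-node whose intervals have union $I$. A $P$-interval is a strong common interval $Int(x)$ with $x$ a $P$-node; all other common intervals are $Q$-intervals. *)

theory Defs
  imports Main
begin

definition common :: "nat list list \<Rightarrow> nat set \<Rightarrow> bool" where
  "common P S \<longleftrightarrow> S \<noteq> {} \<and>
     (\<forall>p\<in>set P. \<exists>i j. i \<le> j \<and> j < length p \<and> S = {p ! k | k. i \<le> k \<and> k \<le> j})"

definition small :: "nat \<Rightarrow> nat set \<Rightarrow> bool" where
  "small b I \<longleftrightarrow> card I \<le> b"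

definition large :: "nat \<Rightarrow> nat set \<Rightarrow> bool" where
  "large b I \<longleftrightarrow> card I > b"

inductive nested :: "nat list list \<Rightarrow> nat \<Rightarrow> nat set \<Rightarrow> bool" for P b where
  single: "common P I \<Longrightarrow> card I = 1 \<Longrightarrow> nested P b I"
| step: "common P I \<Longrightarrow> nested P b J \<Longrightarrow> J \<subset> I \<Longrightarrow> card I \<le> card J + b
          \<Longrightarrow> nested P b I"

definition overlap :: "nat set \<Rightarrow> nat set \<Rightarrow> bool" where
  "overlap A B \<longleftrightarrow>
     (Min A < Min B \<and> Min B \<le> Max A \<and> Max A < Max B) \<or>
     (Min B < Min A \<and> Min A \<le> Max B \<and> Max B < Max A)"

definition strong :: "nat list list \<Rightarrow> nat set \<Rightarrow> bool" where
  "strong P I \<longleftrightarrow> common P I \<and> (\<forall>J. common P J \<longrightarrow> \<not> overlap I J)"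

text \<open>PQ-tree: nodes are the strong common intervals; X is the parent of Y if X is the
  smallest strong common interval strictly containing Y.\<close>
definition is_parent :: "nat list list \<Rightarrow> nat set \<Rightarrow> nat set \<Rightarrow> bool" where
  "is_parent P X Y \<longleftrightarrow> strong P X \<and> strong P Y \<and> Y \<subset> X \<and>
     (\<forall>Z. strong P Z \<and> Y \<subset> Z \<longrightarrow> X \<subseteq> Z)"

definition children :: "nat list list \<Rightarrow> nat set \<Rightarrow> nat set set" where
  "children P X = {Y. is_parent P X Y}"

definition Pnode :: "nat list list \<Rightarrow> nat set \<Rightarrow> bool" where
  "Pnode P X \<longleftrightarrow> strong P X \<and>
     \<not> (\<exists>D'. D' \<subset> children P X \<and> 2 \<le> card D' \<and> card D' < card (children P X)
            \<and> common P (\<Union>D'))"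

definition Qnode :: "nat list list \<Rightarrow> nat set \<Rightarrow> bool" where
  "Qnode P X \<longleftrightarrow> strong P X \<and> \<not> Pnode P X"

definition P_interval :: "nat list list \<Rightarrow> nat set \<Rightarrow> bool" where
  "P_interval P I \<longleftrightarrow> strong P I \<and> Pnode P I"

definition Q_interval :: "nat list list \<Rightarrow> nat set \<Rightarrow> bool" where
  "Q_interval P I \<longleftrightarrow> common P I \<and> \<not> P_interval P I"

text \<open>Domain of a common interval: children of the node if strong, otherwise the set of
  consecutive children of the (unique) Q-node whose union is I.\<close>
definition domain :: "nat list list \<Rightarrow> nat set \<Rightarrow> nat set set" where
  "domain P I = (if strong P I then children P I
     else (THE D. \<exists>X. Qnode P X \<and> D \<subseteq> children P X \<and> \<Union>D = I \<and>
             (\<forall>Y\<in>children P X. Min I \<le> Min Y \<and> Max Y \<le> Max I \<longrightarrow> Y \<in> D)))"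

end

theory Submission
  imports Defs
begin

text \<open>Since the first permutation is the identity, common intervals are integer intervals, and strong
  ones are laminar with every common interval. The heart of the proof is that any union of
  consecutive children of a Q-node X is common. Some union of at least two children is common, and
  a proper such union is never strong (X would be its parent), so it is crossed by another common
  interval; intersections and differences of crossing intervals are common. Playing crossings
  against a longest run of children whose adjacent pairs are all common shows that the union of any
  two adjacent children is common, and such pairs glue to arbitrary runs. Hence, for
  I = x_1 \<union> ... \<union> x_r, both I - x_1 and I - x_r are common. Finally the last step J \<subset> I of a
  nesting chain cannot meet both x_1 and x_r: by laminarity it would contain both and hence all of I.
  So J lies in I - x_1 or in I - x_r, which makes that end child b-small and the rest b-nested.\<close>

section \<open>Integer intervals\<close>

definition crosses :: "nat set \<Rightarrow> nat set \<Rightarrow> bool" where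
  "crosses A B \<longleftrightarrow> A \<inter> B \<noteq> {} \<and> \<not> A \<subseteq> B \<and> \<not> B \<subseteq> A"

lemma common_iff_image_nth: "common P S \<longleftrightarrow> S \<noteq> {} \<and>
   (\<forall>p\<in>set P. \<exists>i j. i \<le> j \<and> j < length p \<and> S = (!) p ` {i..j})"
proof -
  have image: "\<And>p i j. {p ! k | k. i \<le> k \<and> k \<le> j} = (!) p ` {i..j}" by auto
  show ?thesis unfolding common_def by (simp only: image)
qed

lemma Min_atLeastAtMost: "a \<le> c \<Longrightarrow> Min {a..c::nat} = a" by (rule Min_eqI) auto
lemma Max_atLeastAtMost: "a \<le> c \<Longrightarrow> Max {a..c::nat} = c" by (rule Max_eqI) auto

lemma atLeastAtMost_Diff_crossing:
  fixes i j k l :: nat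
  assumes "crosses {i..j} {k..l}"
  shows "\<exists>i' j'. i \<le> i' \<and> i' \<le> j' \<and> j' \<le> j \<and> {i..j} - {k..l} = {i'..j'}"
proof (cases "i < k")
  case True
  then have "l > j" using assms unfolding crosses_def by auto
  then show ?thesis using True assms unfolding crosses_def by (intro exI[of _ i] exI[of _ "k-1"]) auto
next
  case False
  then have "j > l" using assms unfolding crosses_def by auto
  then show ?thesis using False assms unfolding crosses_def by (intro exI[of _ "l+1"] exI[of _ j]) auto
qed

lemma overlap_atLeastAtMost_iff_crosses:
  fixes a c d e :: nat
  assumes "a \<le> c" "d \<le> e"
  shows "overlap {a..c} {d..e} \<longleftrightarrow> crosses {a..c} {d..e}"
  using assms unfolding overlap_def crosses_def Min_atLeastAtMost[OF assms(1)] Max_atLeastAtMost[OF assms(1)]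
    Min_atLeastAtMost[OF assms(2)] Max_atLeastAtMost[OF assms(2)]
  by auto

lemma crosses_atLeastAtMost_cases:
  fixes a v f g :: nat
  assumes "crosses {a..v} {f..g}" "a \<le> v" "f \<le> g"
  shows "(f < a \<and> a \<le> g \<and> g < v) \<or> (a < f \<and> f \<le> v \<and> v < g)"
  using assms unfolding crosses_def by auto

lemma Max_lt_Min_chain:
  fixes xs :: "nat set list"
  assumes ne: "\<forall>y\<in>set xs. y \<noteq> {} \<and> finite y"
    and chain: "\<forall>i. Suc i < length xs \<longrightarrow> Max (xs ! i) + 1 = Min (xs ! Suc i)"
  shows "i < j \<Longrightarrow> j < length xs \<Longrightarrow> Max (xs ! i) < Min (xs ! j)"
proof (induction j)
  case 0 then show ?case by simp
next
  case (Suc j)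
  have step: "Max (xs ! j) + 1 = Min (xs ! Suc j)" using chain Suc.prems by blast
  show ?case
  proof (cases "i = j")
    case True then show ?thesis using step by simp
  next
    case False
    then have "Max (xs ! i) < Min (xs ! j)" using Suc by simp
    moreover have "xs ! j \<noteq> {}" "finite (xs ! j)" using ne Suc.prems by auto
    then have "Min (xs ! j) \<le> Max (xs ! j)" by (simp add: Min_le_iff)
    ultimately show ?thesis using step by simp
  qed
qed

lemma Min_Max_Union_chain:
  fixes xs :: "nat set list"
  assumes ne: "\<forall>y\<in>set xs. y \<noteq> {} \<and> finite y" and xs: "xs \<noteq> []"
    and chain: "\<forall>i. Suc i < length xs \<longrightarrow> Max (xs ! i) + 1 = Min (xs ! Suc i)"
  shows "Min (\<Union>(set xs)) = Min (hd xs)" "Max (\<Union>(set xs)) = Max (last xs)"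
proof -
  have hd: "hd xs = xs ! 0" and last: "last xs = xs ! (length xs - 1)"
    using xs by (auto simp: hd_conv_nth last_conv_nth)
  have fin: "finite (\<Union>(set xs))" and hd_in: "hd xs \<in> set xs" and last_in: "last xs \<in> set xs"
    using ne xs by auto
  have mm: "Min y \<le> Max y" if "y \<in> set xs" for y
    using ne that by (simp add: Min_le_iff)
  have bounds: "Min (hd xs) \<le> z \<and> z \<le> Max (last xs)" if y: "y \<in> set xs" and z: "z \<in> y" for y z
  proof -
    obtain j where j: "j < length xs" "y = xs ! j" using y by (auto simp: in_set_conv_nth)
    have "Min y \<le> z" "z \<le> Max y" using ne y z by auto
    moreover have "Min (hd xs) \<le> Min y"
      using Max_lt_Min_chain[OF ne chain, of 0 j] j hd mm[OF hd_in] by (cases "j = 0") auto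
    moreover have "Max y \<le> Max (last xs)"
    proof (cases "j = length xs - 1")
      case False
      then have "j < length xs - 1" using j by linarith
      then have "Max y < Min (last xs)"
        using Max_lt_Min_chain[OF ne chain, of j "length xs - 1"] j last by simp
      then show ?thesis using mm[OF last_in] by simp
    qed (use j last in simp)
    ultimately show ?thesis by simp
  qed
  show "Min (\<Union>(set xs)) = Min (hd xs)"
  proof (rule Min_eqI[OF fin])
    show "Min (hd xs) \<in> \<Union>(set xs)" using ne hd_in Min_in by blast
  qed (use bounds in blast)
  show "Max (\<Union>(set xs)) = Max (last xs)"
  proof (rule Max_eqI[OF fin])
    show "Max (last xs) \<in> \<Union>(set xs)" using ne last_in Max_in by blast
  qed (use bounds in blast)
qed

lemma Max_hd_lt_Min_last_chain:
  fixes xs :: "nat set list"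
  assumes ne: "\<forall>y\<in>set xs. y \<noteq> {} \<and> finite y" and len: "2 \<le> length xs"
    and chain: "\<forall>i. Suc i < length xs \<longrightarrow> Max (xs ! i) + 1 = Min (xs ! Suc i)"
  shows "Max (hd xs) < Min (last xs)"
proof -
  have "xs \<noteq> []" using len by auto
  then show ?thesis
    using Max_lt_Min_chain[OF ne chain, of 0 "length xs - 1"] len by (simp add: hd_conv_nth last_conv_nth)
qed

section \<open>Nested intervals\<close>

lemma nested_common: "nested P b I \<Longrightarrow> common P I"
  by (induction rule: nested.induct) auto

lemma nested_superset:
  assumes "nested P b J" "J \<subseteq> K" "common P K" "card K \<le> card J + b"
  shows "nested P b K"
  using assms nested.step[of P K b J] by (cases "J = K") auto

lemma nested_Diff_if_disjoint:
  assumes fin: "finite I" and J: "nested P b J" "J \<subseteq> I - A" "card I \<le> card J + b"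
    and A: "A \<subseteq> I" "common P (I - A)"
  shows "small b A \<and> nested P b (I - A)"
proof -
  have card_I: "card I = card (I - A) + card A"
    using card_Diff_subset[OF finite_subset[OF A(1) fin] A(1)] card_mono[OF fin A(1)] by simp
  have "card J \<le> card (I - A)" using card_mono J(2) fin by blast
  then have "small b A" using card_I J(3) unfolding small_def by simp
  moreover have "nested P b (I - A)"
    using nested_superset[OF J(1,2) A(2)] card_I J(3) by simp
  ultimately show ?thesis ..
qed

lemma nested_if_Diff:
  assumes "common P I" "finite I" "A \<subseteq> I" "A \<noteq> {}" "small b A" "nested P b (I - A)"
  shows "nested P b I"
proof (rule nested.step[OF assms(1,6)])
  show "I - A \<subset> I" using assms(3,4) by blast
  show "card I \<le> card (I - A) + b"
    using assms(2-5) card_Diff_subset[of A I] card_mono[of I A] finite_subset[of A I]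
    unfolding small_def by simp
qed

section \<open>Common and strong intervals\<close>

locale permutation_family =
  fixes n :: nat and P :: "nat list list"
  assumes n_pos: "n \<ge> 1" and P_nonempty: "P \<noteq> []" and hd_P: "hd P = [1..<n+1]"
    and perms: "\<forall>p\<in>set P. distinct p \<and> set p = {1..n}"
begin

lemma common_atLeastAtMost:
  assumes "common P S"
  shows "\<exists>a c. 1 \<le> a \<and> a \<le> c \<and> c \<le> n \<and> S = {a..c}"
proof -
  have "hd P \<in> set P" using P_nonempty by simp
  then obtain i j where ij: "i \<le> j" "j < length (hd P)" "S = (!) (hd P) ` {i..j}"
    using assms unfolding common_iff_image_nth by blast
  have nth_hd: "\<And>k. k < length (hd P) \<Longrightarrow> hd P ! k = Suc k"
    unfolding hd_P by (simp del: upt_Suc)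
  have "(!) (hd P) ` {i..j} = Suc ` {i..j}" using ij nth_hd by (intro image_cong) auto
  then have "S = {Suc i..Suc j}" using ij by simp
  moreover have "length (hd P) = n" unfolding hd_P by simp
  ultimately show ?thesis using ij by (intro exI[of _ "Suc i"] exI[of _ "Suc j"]) auto
qed

lemma common_atLeastAtMostE:
  assumes "common P S"
  obtains a c where "S = {a..c}" "a \<le> c"
  using common_atLeastAtMost[OF assms] by blast

lemma common_eq_atLeastAtMost_Min_Max: "common P S \<Longrightarrow> S = {Min S..Max S}"
  and common_nonempty: "common P S \<Longrightarrow> S \<noteq> {}"
  and common_finite: "common P S \<Longrightarrow> finite S"
  and common_subset_range: "common P S \<Longrightarrow> S \<subseteq> {1..n}"
  using common_atLeastAtMost Min_atLeastAtMost Max_atLeastAtMost by fastforce+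

lemma common_Int_Un_Diff:
  assumes A: "common P A" and B: "common P B" and AB: "A \<inter> B \<noteq> {}"
  shows "common P (A \<inter> B)" "common P (A \<union> B)" "crosses A B \<Longrightarrow> common P (A - B)"
proof -
  have in_p: "\<exists>i j. i \<le> j \<and> j < length p \<and> A \<inter> B = (!) p ` {i..j}"
    "\<exists>i j. i \<le> j \<and> j < length p \<and> A \<union> B = (!) p ` {i..j}"
    "crosses A B \<Longrightarrow> \<exists>i j. i \<le> j \<and> j < length p \<and> A - B = (!) p ` {i..j}"
    if p: "p \<in> set P" for p
  proof -
    obtain i j where ij: "i \<le> j" "j < length p" "A = (!) p ` {i..j}"
      using A p unfolding common_iff_image_nth by blast
    obtain k l where kl: "k \<le> l" "l < length p" "B = (!) p ` {k..l}"
      using B p unfolding common_iff_image_nth by blast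
    have inj: "inj_on ((!) p) {..<length p}" using perms p by (intro inj_on_nth) auto
    have sub: "{i..j} \<subseteq> {..<length p}" "{k..l} \<subseteq> {..<length p}" using ij kl by auto
    have Int: "A \<inter> B = (!) p ` ({i..j} \<inter> {k..l})"
      using ij kl inj_on_image_Int[OF inj sub] by simp
    have Diff: "A - B = (!) p ` ({i..j} - {k..l})"
      using ij kl inj_on_image_set_diff[OF inj _ sub(2)] sub(1) by auto
    have ne: "{i..j} \<inter> {k..l} \<noteq> {}" using Int AB by auto
    show "\<exists>i j. i \<le> j \<and> j < length p \<and> A \<inter> B = (!) p ` {i..j}"
      using ne ij kl Int by (intro exI[of _ "max i k"] exI[of _ "min j l"]) auto
    have "{i..j} \<union> {k..l} = {min i k..max j l}" using ne by auto
    then show "\<exists>i j. i \<le> j \<and> j < length p \<and> A \<union> B = (!) p ` {i..j}"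
      using ij kl by (intro exI[of _ "min i k"] exI[of _ "max j l"]) (auto simp: image_Un)
    assume "crosses A B"
    then have "crosses {i..j} {k..l}" using ij kl ne unfolding crosses_def by auto
    then obtain i' j' where "i \<le> i'" "i' \<le> j'" "j' \<le> j" "{i..j} - {k..l} = {i'..j'}"
      using atLeastAtMost_Diff_crossing by blast
    then show "\<exists>i j. i \<le> j \<and> j < length p \<and> A - B = (!) p ` {i..j}"
      using Diff ij by (intro exI[of _ i'] exI[of _ j']) auto
  qed
  show "common P (A \<inter> B)" using in_p(1) AB unfolding common_iff_image_nth by blast
  show "common P (A \<union> B)" using in_p(2) AB unfolding common_iff_image_nth by blast
  assume "crosses A B"
  then show "common P (A - B)" using in_p(3) unfolding common_iff_image_nth crosses_def by blast
qed

lemma common_Int_atLeastAtMost: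
  assumes "common P {a..v}" "common P {f..g}" "max a f \<le> min v g"
  shows "common P {max a f..min v g}"
proof -
  have "{a..v} \<inter> {f..g} = {max a f..min v g}" by auto
  then show ?thesis using common_Int_Un_Diff(1)[OF assms(1,2)] assms(3) by simp
qed

lemma common_crossing_pieces:
  assumes C: "common P {a..v}" and F: "common P {f..g}" and h: "a < f" "f \<le> v" "v < g"
  shows "common P {a..f - 1}" "common P {f..v}" "common P {Suc v..g}" "common P {a..g}"
proof -
  have ne: "{a..v} \<inter> {f..g} \<noteq> {}" and cr: "crosses {a..v} {f..g}" "crosses {f..g} {a..v}"
    using h unfolding crosses_def by auto
  have "{a..v} - {f..g} = {a..f - 1}" "{f..g} - {a..v} = {Suc v..g}" "{a..v} \<inter> {f..g} = {f..v}"
    "{a..v} \<union> {f..g} = {a..g}"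
    using h by auto
  then show "common P {a..f - 1}" "common P {f..v}" "common P {Suc v..g}" "common P {a..g}"
    using common_Int_Un_Diff[OF C F ne] common_Int_Un_Diff(3)[OF F C] ne cr by (auto simp: Int_commute)
qed

lemma common_overlap_iff_crosses:
  assumes "common P A" "common P B"
  shows "overlap A B \<longleftrightarrow> crosses A B"
proof -
  obtain a c d e where "A = {a..c}" "a \<le> c" "B = {d..e}" "d \<le> e"
    using common_atLeastAtMostE[OF assms(1)] common_atLeastAtMostE[OF assms(2)] by metis
  then show ?thesis using overlap_atLeastAtMost_iff_crosses by simp
qed

lemma strong_laminar:
  assumes "strong P A" "common P B" "A \<inter> B \<noteq> {}"
  shows "A \<subseteq> B \<or> B \<subseteq> A"
  using assms common_overlap_iff_crosses[of A B] unfolding strong_def crosses_def by auto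

lemma strong_common: "strong P S \<Longrightarrow> common P S"
  unfolding strong_def by blast

lemma common_range: "common P {1..n}"
proof -
  have "\<exists>i j. i \<le> j \<and> j < length p \<and> {1..n} = (!) p ` {i..j}" if p: "p \<in> set P" for p
  proof -
    have d: "distinct p" and sp: "set p = {1..n}" using perms p by auto
    have lp: "length p = n" using distinct_card[OF d] sp by simp
    have "(!) p ` {0..n-1} = set p" using lp n_pos by (auto simp: set_conv_nth)
    then show ?thesis using lp n_pos sp by (intro exI[of _ 0] exI[of _ "n-1"]) auto
  qed
  then show ?thesis using n_pos unfolding common_iff_image_nth by auto
qed

lemma strong_range: "strong P {1..n}"
  unfolding strong_def using common_range common_subset_range common_overlap_iff_crosses
  by (auto simp: crosses_def)

lemma strong_singleton:
  assumes "x \<in> {1..n}" shows "strong P {x}"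
proof -
  have "\<exists>i j. i \<le> j \<and> j < length p \<and> {x} = (!) p ` {i..j}" if p: "p \<in> set P" for p
  proof -
    have "x \<in> set p" using perms p assms by auto
    then obtain i where "i < length p" "p ! i = x" by (auto simp: in_set_conv_nth)
    then show ?thesis by (intro exI[of _ i] exI[of _ i]) auto
  qed
  then have c: "common P {x}" unfolding common_iff_image_nth by auto
  show ?thesis unfolding strong_def using c common_overlap_iff_crosses[OF c] by (auto simp: crosses_def)
qed

lemma childD: "Y \<in> children P X \<Longrightarrow> strong P Y \<and> strong P X \<and> Y \<subset> X"
  unfolding children_def is_parent_def by auto

lemma child_minimal: "Y \<in> children P X \<Longrightarrow> strong P Z \<Longrightarrow> Y \<subset> Z \<Longrightarrow> X \<subseteq> Z"
  unfolding children_def is_parent_def by auto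

lemma children_disjoint:
  assumes "Y1 \<in> children P X" "Y2 \<in> children P X" "Y1 \<inter> Y2 \<noteq> {}"
  shows "Y1 = Y2"
proof (rule ccontr)
  assume "Y1 \<noteq> Y2"
  moreover have "Y1 \<subseteq> Y2 \<or> Y2 \<subseteq> Y1"
    using strong_laminar[of Y1 Y2] assms childD strong_common by blast
  ultimately have "Y1 \<subset> Y2 \<or> Y2 \<subset> Y1" by blast
  then show False
    using child_minimal[OF assms(1), of Y2] child_minimal[OF assms(2), of Y1] childD assms(1,2) by blast
qed

lemma finite_strong: "finite {S. strong P S}"
proof (rule finite_subset)
  show "{S. strong P S} \<subseteq> Pow {1..n}" using common_subset_range strong_common by auto
qed simp

lemma finite_children: "finite (children P X)"
  by (rule rev_finite_subset[OF finite_strong]) (use childD in auto)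

lemma child_containing:
  assumes X: "strong P X" and x: "x \<in> X" and nx: "X \<noteq> {x}"
  shows "\<exists>Y\<in>children P X. x \<in> Y"
proof -
  define S where "S = {Y. strong P Y \<and> x \<in> Y \<and> Y \<subset> X}"
  have "x \<in> {1..n}" using common_subset_range strong_common X x by blast
  then have x_S: "{x} \<in> S" unfolding S_def using strong_singleton x nx by auto
  have "card Z < Suc (card {1..n})" if "Z \<in> S" for Z
    using that common_subset_range[OF strong_common, of Z] unfolding S_def
    by (simp add: less_Suc_eq_le card_mono del: card_atLeastAtMost)
  then obtain Y where Y: "Y \<in> S" "\<forall>Z\<in>S. card Z \<le> card Y"
    using ex_has_greatest_nat[of "\<lambda>Y. Y \<in> S" "{x}" card] x_S by blast
  have "is_parent P X Y"
    unfolding is_parent_def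
  proof (intro conjI allI impI)
    show "strong P X" "strong P Y" "Y \<subset> X" using X Y unfolding S_def by auto
    fix Z assume Z: "strong P Z \<and> Y \<subset> Z"
    then have "X \<subseteq> Z \<or> Z \<subseteq> X"
      using strong_laminar[OF X strong_common, of Z] Y unfolding S_def by blast
    moreover have "card Y < card Z" if "Z \<subseteq> X"
      using Z common_finite[OF strong_common] psubset_card_mono by blast
    then have "\<not> Z \<subset> X" using Y Z unfolding S_def by fastforce
    ultimately show "X \<subseteq> Z" by blast
  qed
  then show ?thesis using Y unfolding S_def children_def by auto
qed

lemma Union_children:
  assumes "strong P X" "\<And>x. X \<noteq> {x}"
  shows "\<Union>(children P X) = X"
  using child_containing assms childD by blast

lemma children_singleton: "children P {x} = {}"
  using childD strong_common common_nonempty by blast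

lemma QnodeD:
  assumes "Qnode P X"
  shows "strong P X" "\<exists>D. D \<subset> children P X \<and> 2 \<le> card D \<and> card D < card (children P X)
            \<and> common P (\<Union>D)"
  using assms unfolding Qnode_def Pnode_def by auto

lemma Qnode_not_singleton: "Qnode P X \<Longrightarrow> X \<noteq> {x}"
  using QnodeD(2)[of X] children_singleton[of x] by force

end

section \<open>Unions of consecutive children of a Q-node\<close>

locale Q_node = permutation_family +
  fixes X assumes Qnode_X: "Qnode P X"
begin

definition child :: "nat \<Rightarrow> nat set" where
  "child x = (SOME Y. Y \<in> children P X \<and> x \<in> Y)"

definition lo :: "nat \<Rightarrow> nat" where "lo x = Min (child x)"
definition hi :: "nat \<Rightarrow> nat" where "hi x = Max (child x)"

definition spans :: "nat set \<Rightarrow> bool" where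
  "spans C \<longleftrightarrow> (\<exists>x\<in>C. \<exists>y\<in>C. child x \<noteq> child y)"

definition boundary :: "nat \<Rightarrow> bool" where
  "boundary t \<longleftrightarrow> t \<in> X \<and> Suc t \<in> X \<and> child t \<noteq> child (Suc t)"

definition adjacent_union :: "nat \<Rightarrow> nat set" where
  "adjacent_union t = {lo t..hi (Suc t)}"

lemma strong_X: "strong P X"
  using QnodeD(1)[OF Qnode_X] .

lemma common_X: "common P X"
  using strong_X strong_common by blast

lemma atLeastAtMost_subset_X: "u \<in> X \<Longrightarrow> v \<in> X \<Longrightarrow> {u..v} \<subseteq> X"
proof -
  obtain f g where "X = {f..g}" using common_atLeastAtMostE[OF common_X] .
  then show "u \<in> X \<Longrightarrow> v \<in> X \<Longrightarrow> {u..v} \<subseteq> X" by auto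
qed

lemma child_mem: "x \<in> X \<Longrightarrow> child x \<in> children P X \<and> x \<in> child x"
  unfolding child_def
  by (rule someI_ex) (use child_containing[OF strong_X _ Qnode_not_singleton[OF Qnode_X]] in blast)

lemma child_common: "x \<in> X \<Longrightarrow> common P (child x)"
  using child_mem childD strong_common by blast

lemma child_psubset: "x \<in> X \<Longrightarrow> child x \<subset> X"
  using child_mem childD by blast

lemma child_of_child: "Y \<in> children P X \<Longrightarrow> y \<in> Y \<Longrightarrow> child y = Y"
  using children_disjoint child_mem childD by blast

lemma child_eq: "x \<in> X \<Longrightarrow> y \<in> child x \<Longrightarrow> child y = child x"
  using child_of_child child_mem by blast

lemma child_atLeastAtMost:
  assumes "x \<in> X" shows "child x = {lo x..hi x}" "lo x \<le> x" "x \<le> hi x"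
proof -
  show "child x = {lo x..hi x}"
    unfolding lo_def hi_def using common_eq_atLeastAtMost_Min_Max[OF child_common[OF assms]] .
  then show "lo x \<le> x" "x \<le> hi x" using child_mem[OF assms] by auto
qed

lemma child_eqI: "x \<in> X \<Longrightarrow> lo x \<le> y \<Longrightarrow> y \<le> hi x \<Longrightarrow> child y = child x"
  by (rule child_eq) (auto simp: child_atLeastAtMost(1))

lemma lo_hi_mem:
  assumes "x \<in> X" shows "lo x \<in> X" "hi x \<in> X" "child (lo x) = child x" "child (hi x) = child x"
proof -
  have "lo x \<in> child x" "hi x \<in> child x" using child_atLeastAtMost[OF assms] by auto
  then show "lo x \<in> X" "hi x \<in> X" "child (lo x) = child x" "child (hi x) = child x"
    using child_eq[OF assms] child_psubset[OF assms] by blast+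
qed

lemma lo_lo: "x \<in> X \<Longrightarrow> lo (lo x) = lo x"
  using lo_hi_mem unfolding lo_def by simp

lemma hi_hi: "x \<in> X \<Longrightarrow> hi (hi x) = hi x"
  using lo_hi_mem unfolding hi_def by simp

lemma lo_hi_of_child: "Y \<in> children P X \<Longrightarrow> y \<in> Y \<Longrightarrow> lo y = Min Y \<and> hi y = Max Y"
  using child_of_child unfolding lo_def hi_def by simp

lemma no_boundary_in_child:
  assumes "x \<in> X" "lo x \<le> s" "Suc s \<le> hi x" shows "\<not> boundary s"
proof -
  have "s \<in> X" "Suc s \<in> X"
    using assms lo_hi_mem atLeastAtMost_subset_X[of "lo x" "hi x"] by auto
  then show ?thesis using child_eqI[OF assms(1)] assms unfolding boundary_def by simp
qed

lemma boundary_facts: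
  assumes "boundary t"
  shows "hi t = t" "lo (Suc t) = Suc t" "lo t \<le> t" "Suc t \<le> hi (Suc t)"
proof -
  have t: "t \<in> X" "Suc t \<in> X" "child t \<noteq> child (Suc t)" using assms unfolding boundary_def by auto
  show "hi t = t"
    using child_eqI[OF t(1), of "Suc t"] child_atLeastAtMost[OF t(1)] t(3) by force
  show "lo (Suc t) = Suc t"
    using child_eqI[OF t(2), of t] child_atLeastAtMost[OF t(2)] t(3) by force
  show "lo t \<le> t" "Suc t \<le> hi (Suc t)" using child_atLeastAtMost t by auto
qed

lemma boundary_hi:
  assumes "x \<in> X" "Suc (hi x) \<in> X" shows "boundary (hi x)"
proof -
  have "Suc (hi x) \<notin> child (hi x)"
    using lo_hi_mem(4)[OF assms(1)] child_atLeastAtMost(1)[OF assms(1)] by simp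
  then show ?thesis
    using lo_hi_mem(2)[OF assms(1)] assms(2) child_mem[OF assms(2)] unfolding boundary_def by metis
qed

lemma boundary_pred_lo:
  assumes "x \<in> X" "w \<in> X" "Suc w = lo x" shows "boundary w"
proof -
  have "w \<notin> child (Suc w)"
    using lo_hi_mem(3)[OF assms(1)] child_atLeastAtMost(1)[OF assms(1)] assms(3) by simp
  then show ?thesis
    using lo_hi_mem(1)[OF assms(1)] assms(2,3) child_mem[OF assms(2)] unfolding boundary_def by metis
qed

lemma spans_boundary: "boundary t \<Longrightarrow> t \<in> C \<Longrightarrow> Suc t \<in> C \<Longrightarrow> spans C"
  unfolding boundary_def spans_def by blast

lemma spans_child_subset:
  assumes C: "common P C" "C \<subseteq> X" "spans C" and z: "z \<in> C"
  shows "child z \<subseteq> C"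
proof -
  obtain x y where xy: "x \<in> C" "y \<in> C" "child x \<noteq> child y" using C(3) unfolding spans_def by blast
  have zX: "z \<in> X" using z C by blast
  have "\<not> C \<subseteq> child z" using child_eq[OF zX] xy by (metis subsetD)
  then show ?thesis
    using strong_laminar[OF _ C(1)] child_mem[OF zX] childD z by blast
qed

lemma spans_bounds:
  assumes "common P {a..v}" "{a..v} \<subseteq> X" "spans {a..v}" "a \<le> z" "z \<le> v"
  shows "a \<le> lo z" "hi z \<le> v"
  using spans_child_subset[OF assms(1-3), of z] child_atLeastAtMost[of z] assms by auto

text \<open>C is not strong, as X would be its parent; so it is crossed by a common interval.\<close>
lemma spans_crossed:
  assumes C: "common P C" "C \<subseteq> X" "C \<noteq> X" "spans C"
  shows "\<exists>F. common P F \<and> crosses C F \<and> F \<subseteq> X \<and> spans F"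
proof -
  obtain x y where xy: "x \<in> C" "y \<in> C" "child x \<noteq> child y" using C(4) unfolding spans_def by blast
  have xX: "x \<in> X" using xy C by blast
  have "\<not> strong P C"
  proof
    assume "strong P C"
    moreover have "child x \<subset> C"
      using spans_child_subset[OF C(1,2,4) xy(1)] child_eq[OF xX] xy by blast
    ultimately show False using child_minimal child_mem[OF xX] C(2,3) by blast
  qed
  then obtain F where F: "common P F" "crosses C F"
    using C(1) common_overlap_iff_crosses unfolding strong_def by blast
  have "X \<subseteq> F \<or> F \<subseteq> X" using strong_laminar[OF strong_X F(1)] F(2) C(2) unfolding crosses_def by blast
  then have FX: "F \<subseteq> X" using F(2) C(2) unfolding crosses_def by blast
  obtain w w' where w: "w \<in> F" "w \<in> C" "w' \<in> F" "w' \<notin> C" using F(2) unfolding crosses_def by blast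
  have "child w \<noteq> child w'"
    using spans_child_subset[OF C(1,2,4) w(2)] child_mem FX w by blast
  then show ?thesis using F FX w unfolding spans_def by blast
qed

lemma crossing_interval:
  assumes "common P {a..v}" "{a..v} \<subseteq> X" "{a..v} \<noteq> X" "spans {a..v}" "a \<le> v"
  obtains f g where "common P {f..g}" "{f..g} \<subseteq> X" "spans {f..g}"
    "(f < a \<and> a \<le> g \<and> g < v) \<or> (a < f \<and> f \<le> v \<and> v < g)"
proof -
  obtain F where F: "common P F" "crosses {a..v} F" "F \<subseteq> X" "spans F"
    using spans_crossed[OF assms(1-4)] by blast
  obtain f g where "F = {f..g}" "f \<le> g" using common_atLeastAtMostE[OF F(1)] .
  then show ?thesis using that F crosses_atLeastAtMost_cases[of a v f g] assms(5) by blast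
qed

lemma lo_run_shrinks_or_tail:
  assumes bt: "boundary t" and tv: "Suc t \<le> v"
    and C: "common P {lo t..v}" "{lo t..v} \<subseteq> X" "{lo t..v} \<noteq> X"
  shows "(\<exists>v'. v' < v \<and> Suc t \<le> v' \<and> common P {lo t..v'}) \<or> common P {Suc t..v}"
proof -
  note bf = boundary_facts[OF bt]
  have tX: "t \<in> X" using bt unfolding boundary_def by blast
  have sp: "spans {lo t..v}" using spans_boundary[OF bt] bf tv by simp
  have ltv: "lo t \<le> v" using bf tv by simp
  obtain f g where F: "common P {f..g}" "{f..g} \<subseteq> X" "spans {f..g}"
    and cr: "(f < lo t \<and> lo t \<le> g \<and> g < v) \<or> (lo t < f \<and> f \<le> v \<and> v < g)"
    using crossing_interval[OF C sp ltv] by blast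
  from cr show ?thesis
  proof
    assume h: "f < lo t \<and> lo t \<le> g \<and> g < v"
    have pieces: "common P {lo t..g}" "common P {Suc g..v}"
      using common_crossing_pieces(2,3)[OF F(1) C(1)] h by auto
    show ?thesis
    proof (cases "Suc t \<le> g")
      case True then show ?thesis using pieces h by blast
    next
      case False
      have "child g = child t" using child_eqI[OF tX, of g] h False bf by simp
      then have "hi g = t" using bf(1) unfolding hi_def by simp
      moreover have "hi g \<le> g" using spans_bounds(2)[OF F, of g] h by simp
      ultimately have "g = t" using False by simp
      then show ?thesis using pieces by simp
    qed
  next
    assume h: "lo t < f \<and> f \<le> v \<and> v < g"
    have pieces: "common P {lo t..f - 1}" "common P {f..v}"
      using common_crossing_pieces(1,2)[OF C(1) F(1)] h by auto
    have sf: "Suc t \<le> f"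
    proof (rule ccontr)
      assume "\<not> Suc t \<le> f"
      then have "child f = child t" using child_eqI[OF tX, of f] h bf by simp
      then have "lo f = lo t" unfolding lo_def by simp
      moreover have "f \<le> lo f" using spans_bounds(1)[OF F, of f] h by simp
      ultimately show False using h by simp
    qed
    show ?thesis
    proof (cases "Suc t \<le> f - 1")
      case True then show ?thesis using pieces(1) h by (intro disjI1 exI[of _ "f - 1"]) auto
    next
      case False
      then have "f = Suc t" using sf by simp
      then show ?thesis using pieces(2) by simp
    qed
  qed
qed

lemma lo_run_tail_shrinks:
  assumes bt: "boundary t" and tv: "Suc t \<le> v"
    and C: "common P {lo t..v}" "{lo t..v} \<subseteq> X"
    and hv: "hi (Suc t) < v" and E: "common P {Suc t..v}"
  shows "\<exists>v'. v' < v \<and> Suc t \<le> v' \<and> common P {lo t..v'}"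
proof -
  note bf = boundary_facts[OF bt]
  have tX: "t \<in> X" "Suc t \<in> X" using bt unfolding boundary_def by auto
  have EX: "{Suc t..v} \<subseteq> X" using C(2) bf by auto
  have EnX: "{Suc t..v} \<noteq> X" using tX by auto
  have vX: "v \<in> X" using EX tv by auto
  have "v \<notin> child (Suc t)" using child_atLeastAtMost(1)[OF tX(2)] hv by simp
  then have "child v \<noteq> child (Suc t)" using child_mem[OF vX] by auto
  moreover have "v \<in> {Suc t..v}" "Suc t \<in> {Suc t..v}" using tv by auto
  ultimately have sp: "spans {Suc t..v}" unfolding spans_def by blast
  obtain f g where F: "common P {f..g}" "{f..g} \<subseteq> X" "spans {f..g}"
    and cr: "(f < Suc t \<and> Suc t \<le> g \<and> g < v) \<or> (Suc t < f \<and> f \<le> v \<and> v < g)"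
    using crossing_interval[OF E EX EnX sp tv] by blast
  from cr show ?thesis
  proof
    assume h: "f < Suc t \<and> Suc t \<le> g \<and> g < v"
    have "f \<le> lo t" using spans_bounds(1)[OF F, of t] h by simp
    then have "max (lo t) f = lo t" "min v g = g" "lo t \<le> g" using h bf by auto
    then have "common P {lo t..g}" using common_Int_atLeastAtMost[OF C(1) F(1)] by simp
    then show ?thesis using h by blast
  next
    assume h: "Suc t < f \<and> f \<le> v \<and> v < g"
    then have "common P {lo t..f - 1}" using common_crossing_pieces(1)[OF C(1) F(1)] bf by simp
    then show ?thesis using h by (intro exI[of _ "f - 1"]) auto
  qed
qed

lemma adjacent_union_common_from_lo:
  assumes bt: "boundary t"
  shows "Suc t \<le> v \<Longrightarrow> common P {lo t..v} \<Longrightarrow> {lo t..v} \<subseteq> X \<Longrightarrow> {lo t..v} \<noteq> X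
    \<Longrightarrow> common P (adjacent_union t)"
proof (induction v rule: less_induct)
  case (less v)
  note bf = boundary_facts[OF bt]
  have sp: "spans {lo t..v}" using spans_boundary[OF bt] bf less.prems(1) by simp
  have "hi (Suc t) \<le> v" using spans_bounds(2)[OF less.prems(2,3) sp, of "Suc t"] bf less.prems(1) by simp
  show ?case
  proof (cases "hi (Suc t) = v")
    case True then show ?thesis using less.prems(2) unfolding adjacent_union_def by simp
  next
    case False
    then have hv: "hi (Suc t) < v" using \<open>hi (Suc t) \<le> v\<close> by simp
    obtain v' where v': "v' < v" "Suc t \<le> v'" "common P {lo t..v'}"
      using lo_run_shrinks_or_tail[OF bt less.prems] lo_run_tail_shrinks[OF bt less.prems(1-3) hv]
      by blast
    have "v \<in> X" using less.prems(1,3) bf by auto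
    moreover have "v \<notin> {lo t..v'}" using v'(1) by simp
    ultimately have "{lo t..v'} \<noteq> X" by blast
    moreover have "{lo t..v'} \<subseteq> X" using less.prems(3) v'(1) by auto
    ultimately
    show ?thesis using less.IH[OF v'] by blast
  qed
qed

lemma hi_run_shrinks_or_head:
  assumes bt: "boundary t" and ut: "u \<le> t"
    and C: "common P {u..hi (Suc t)}" "{u..hi (Suc t)} \<subseteq> X" "{u..hi (Suc t)} \<noteq> X"
  shows "(\<exists>u'. u < u' \<and> u' \<le> t \<and> common P {u'..hi (Suc t)}) \<or> common P {u..t}"
proof -
  note bf = boundary_facts[OF bt]
  have tX: "Suc t \<in> X" using bt unfolding boundary_def by blast
  have sp: "spans {u..hi (Suc t)}" using spans_boundary[OF bt] bf ut by simp
  have ub: "u \<le> hi (Suc t)" using bf ut by simp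
  obtain f g where F: "common P {f..g}" "{f..g} \<subseteq> X" "spans {f..g}"
    and cr: "(f < u \<and> u \<le> g \<and> g < hi (Suc t)) \<or> (u < f \<and> f \<le> hi (Suc t) \<and> hi (Suc t) < g)"
    using crossing_interval[OF C sp ub] by blast
  from cr show ?thesis
  proof
    assume h: "f < u \<and> u \<le> g \<and> g < hi (Suc t)"
    have pieces: "common P {u..g}" "common P {Suc g..hi (Suc t)}"
      using common_crossing_pieces(2,3)[OF F(1) C(1)] h by auto
    have gt: "g \<le> t"
    proof (rule ccontr)
      assume "\<not> g \<le> t"
      then have "child g = child (Suc t)" using child_eqI[OF tX, of g] h bf by simp
      then have "hi g = hi (Suc t)" unfolding hi_def by simp
      moreover have "hi g \<le> g" using spans_bounds(2)[OF F, of g] h by simp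
      ultimately show False using h by simp
    qed
    show ?thesis
    proof (cases "Suc g \<le> t")
      case True then show ?thesis using pieces(2) h by (intro disjI1 exI[of _ "Suc g"]) auto
    next
      case False
      then have "g = t" using gt by simp
      then show ?thesis using pieces(1) by simp
    qed
  next
    assume h: "u < f \<and> f \<le> hi (Suc t) \<and> hi (Suc t) < g"
    have pieces: "common P {u..f - 1}" "common P {f..hi (Suc t)}"
      using common_crossing_pieces(1,2)[OF C(1) F(1)] h by auto
    show ?thesis
    proof (cases "f \<le> t")
      case True then show ?thesis using pieces(2) h by blast
    next
      case False
      then have "child f = child (Suc t)" using child_eqI[OF tX, of f] h bf by simp
      then have "lo f = Suc t" using bf(2) unfolding lo_def by simp
      moreover have "f \<le> lo f" using spans_bounds(1)[OF F, of f] h by simp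
      ultimately have "f = Suc t" using False by simp
      then show ?thesis using pieces(1) by simp
    qed
  qed
qed

lemma hi_run_head_shrinks:
  assumes bt: "boundary t" and ut: "u \<le> t"
    and C: "common P {u..hi (Suc t)}" "{u..hi (Suc t)} \<subseteq> X"
    and hu: "u < lo t" and E: "common P {u..t}"
  shows "\<exists>u'. u < u' \<and> u' \<le> t \<and> common P {u'..hi (Suc t)}"
proof -
  note bf = boundary_facts[OF bt]
  have tX: "t \<in> X" "Suc t \<in> X" using bt unfolding boundary_def by auto
  have EX: "{u..t} \<subseteq> X" using C(2) bf by auto
  have EnX: "{u..t} \<noteq> X" using tX by auto
  have uX: "u \<in> X" using EX ut by auto
  have "u \<notin> child t" using child_atLeastAtMost(1)[OF tX(1)] hu by simp
  then have "child u \<noteq> child t" using child_mem[OF uX] by auto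
  moreover have "u \<in> {u..t}" "t \<in> {u..t}" using ut by auto
  ultimately have sp: "spans {u..t}" unfolding spans_def by blast
  obtain f g where F: "common P {f..g}" "{f..g} \<subseteq> X" "spans {f..g}"
    and cr: "(f < u \<and> u \<le> g \<and> g < t) \<or> (u < f \<and> f \<le> t \<and> t < g)"
    using crossing_interval[OF E EX EnX sp ut] by blast
  from cr show ?thesis
  proof
    assume h: "f < u \<and> u \<le> g \<and> g < t"
    then have "common P {Suc g..hi (Suc t)}" using common_crossing_pieces(3)[OF F(1) C(1)] bf by simp
    then show ?thesis using h by (intro exI[of _ "Suc g"]) auto
  next
    assume h: "u < f \<and> f \<le> t \<and> t < g"
    have "hi (Suc t) \<le> g" using spans_bounds(2)[OF F, of "Suc t"] h bf by simp
    then have "max u f = f" "min (hi (Suc t)) g = hi (Suc t)" "f \<le> hi (Suc t)" using h bf by auto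
    then have "common P {f..hi (Suc t)}" using common_Int_atLeastAtMost[OF C(1) F(1)] by simp
    then show ?thesis using h by blast
  qed
qed

lemma adjacent_union_common_to_hi:
  assumes bt: "boundary t"
  shows "u \<le> t \<Longrightarrow> common P {u..hi (Suc t)} \<Longrightarrow> {u..hi (Suc t)} \<subseteq> X \<Longrightarrow> {u..hi (Suc t)} \<noteq> X
    \<Longrightarrow> common P (adjacent_union t)"
proof (induction "t - u" arbitrary: u rule: less_induct)
  case less
  note bf = boundary_facts[OF bt]
  have sp: "spans {u..hi (Suc t)}" using spans_boundary[OF bt] bf less.prems(1) by simp
  have "u \<le> lo t" using spans_bounds(1)[OF less.prems(2,3) sp, of t] bf less.prems(1) by simp
  show ?case
  proof (cases "u = lo t")
    case True then show ?thesis using less.prems(2) unfolding adjacent_union_def by simp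
  next
    case False
    then have hu: "u < lo t" using \<open>u \<le> lo t\<close> by simp
    obtain u' where u': "u < u'" "u' \<le> t" "common P {u'..hi (Suc t)}"
      using hi_run_shrinks_or_head[OF bt less.prems] hi_run_head_shrinks[OF bt less.prems(1-3) hu]
      by blast
    have "u \<in> X" using less.prems(1,3) bf by auto
    moreover have "u \<notin> {u'..hi (Suc t)}" using u'(1) by simp
    ultimately have "{u'..hi (Suc t)} \<noteq> X" by blast
    moreover have "{u'..hi (Suc t)} \<subseteq> X" using less.prems(3) u'(1) by auto
    ultimately have sub: "{u'..hi (Suc t)} \<subseteq> X" "{u'..hi (Suc t)} \<noteq> X" by blast+
    have "t - u' < t - u" using u' less.prems(1) by simp
    from less(1)[OF this u'(2,3) sub] show ?thesis .
  qed
qed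

lemma common_run_if_adjacent_unions_common:
  assumes adj: "\<forall>s. boundary s \<and> u \<le> s \<and> s < v \<longrightarrow> common P (adjacent_union s)"
  shows "u \<in> X \<Longrightarrow> v \<in> X \<Longrightarrow> lo u = u \<Longrightarrow> hi v = v \<Longrightarrow> u \<le> v \<Longrightarrow> common P {u..v}"
  using adj
proof (induction v rule: less_induct)
  case (less v)
  have uX: "u \<in> X" and vX: "v \<in> X" using less.prems by auto
  show ?case
  proof (cases "v \<in> child u")
    case True
    then have "hi u = v" using child_eq[OF uX True] less.prems(4) unfolding hi_def by simp
    then have "{u..v} = child u" using child_atLeastAtMost(1)[OF uX] less.prems(3) by simp
    then show ?thesis using child_common[OF uX] by simp
  next
    case False
    have "u < lo v"
    proof (rule ccontr)
      assume "\<not> u < lo v"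
      then have "child u = child v" using child_eqI[OF vX, of u] less.prems(4,5) by simp
      then show False using False child_mem[OF vX] by simp
    qed
    define w where "w = lo v - 1"
    have Sw: "Suc w = lo v" and uw: "u \<le> w" "w < v"
      using \<open>u < lo v\<close> child_atLeastAtMost(2)[OF vX] w_def by auto
    have wX: "w \<in> X" using atLeastAtMost_subset_X[OF uX vX] uw by auto
    have bw: "boundary w" using boundary_pred_lo[OF vX wX Sw] .
    have hw: "hi w = w" using boundary_facts(1)[OF bw] .
    have I1: "common P {u..w}" using less.IH[OF uw(2) uX wX less.prems(3) hw uw(1)] less.prems(6) uw by auto
    have "child (Suc w) = child v" using Sw lo_hi_mem(3)[OF vX] by simp
    then have "hi (Suc w) = v" using less.prems(4) unfolding hi_def by simp
    then have I2: "common P {lo w..v}" using less.prems(6) bw uw unfolding adjacent_union_def by auto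
    have "u \<le> lo w"
    proof (rule ccontr)
      assume "\<not> u \<le> lo w"
      then have "child u = child w" using child_eqI[OF wX, of u] uw hw by simp
      then have "lo u = lo w" unfolding lo_def by simp
      then show False using \<open>\<not> u \<le> lo w\<close> less.prems(3) by simp
    qed
    moreover have "lo w \<le> w" using child_atLeastAtMost(2)[OF wX] .
    ultimately have "{u..w} \<inter> {lo w..v} \<noteq> {}" "{u..w} \<union> {lo w..v} = {u..v}" using uw by auto
    then show ?thesis using common_Int_Un_Diff(2)[OF I1 I2] by simp
  qed
qed

lemma ex_common_adjacent_union: "\<exists>t. boundary t \<and> common P (adjacent_union t)"
proof -
  obtain D where D: "D \<subset> children P X" "2 \<le> card D" "common P (\<Union>D)"
    using QnodeD(2)[OF Qnode_X] by blast
  have fD: "finite D" using D(1) finite_children finite_subset by blast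
  obtain Y1 Y2 where Y: "Y1 \<in> D" "Y2 \<in> D" "Y1 \<noteq> Y2"
    using D(2) card_le_Suc0_iff_eq[OF fD] by (metis One_nat_def not_less_eq_eq numeral_2_eq_2)
  have ch: "Y1 \<in> children P X" "Y2 \<in> children P X" using Y D(1) by auto
  obtain x1 x2 where x: "x1 \<in> Y1" "x2 \<in> Y2"
    using ch childD strong_common common_nonempty by (metis ex_in_conv)
  have "spans (\<Union>D)" unfolding spans_def using Y x child_of_child[OF ch(1) x(1)] child_of_child[OF ch(2) x(2)]
    by blast
  moreover have "\<Union>D \<subseteq> X" using D(1) childD by blast
  moreover have "\<Union>D \<noteq> X"
  proof
    assume UX: "\<Union>D = X"
    obtain Y where Y: "Y \<in> children P X" "Y \<notin> D" using D(1) by blast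
    obtain y where "y \<in> Y" using Y(1) childD strong_common common_nonempty by (metis ex_in_conv)
    then show False using UX Y D(1) child_of_child childD by blast
  qed
  moreover obtain u v where uv: "\<Union>D = {u..v}" "u \<le> v" using common_atLeastAtMostE[OF D(3)] .
  ultimately have C: "common P {u..v}" "{u..v} \<subseteq> X" "{u..v} \<noteq> X" "spans {u..v}" using D(3) by auto
  have uX: "u \<in> X" using C(2) uv by auto
  have lu: "lo u = u" using spans_bounds(1)[OF C(1,2,4), of u] uv(2) child_atLeastAtMost(2)[OF uX] by simp
  have "hi u < v"
  proof (rule ccontr)
    assume "\<not> hi u < v"
    then have "{u..v} \<subseteq> child u" using spans_bounds(2)[OF C(1,2,4), of u] uv(2) child_atLeastAtMost(1)[OF uX] lu
      by simp
    then show False using C(4) child_eq[OF uX] unfolding spans_def by (metis subsetD)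
  qed
  then have "Suc (hi u) \<in> X" using C(2) child_atLeastAtMost(2,3)[OF uX] lu by auto
  then have bt: "boundary (hi u)" using boundary_hi[OF uX] by blast
  have "lo (hi u) = u" using lo_hi_mem(4)[OF uX] lu unfolding lo_def by simp
  then have "common P (adjacent_union (hi u))"
    using adjacent_union_common_from_lo[OF bt, of v] \<open>hi u < v\<close> C(1-3) by simp
  then show ?thesis using bt by blast
qed

text \<open>Runs of consecutive children, from the one starting at u to the one ending at v, whose
  adjacent pairs all have common unions.\<close>
definition good_run :: "nat \<Rightarrow> nat \<Rightarrow> bool" where
  "good_run u v \<longleftrightarrow> u \<in> X \<and> v \<in> X \<and> lo u = u \<and> hi v = v \<and> u < v \<and> child u \<noteq> child v \<and>
     (\<forall>s. boundary s \<and> u \<le> s \<and> s < v \<longrightarrow> common P (adjacent_union s))"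

lemma good_run_facts:
  assumes G: "good_run u v"
  shows "common P {u..v}" "{u..v} \<subseteq> X" "spans {u..v}" "u < lo v" "hi u < v"
proof -
  have uX: "u \<in> X" and vX: "v \<in> X" and lu: "lo u = u" and hv: "hi v = v" and uv: "u < v"
    and cuv: "child u \<noteq> child v"
    using G unfolding good_run_def by auto
  show "common P {u..v}"
    using common_run_if_adjacent_unions_common[of u v] G uX vX lu hv uv unfolding good_run_def by simp
  show "{u..v} \<subseteq> X" using atLeastAtMost_subset_X[OF uX vX] .
  have "u \<in> {u..v}" "v \<in> {u..v}" using uv by auto
  then show "spans {u..v}" unfolding spans_def using cuv by blast
  show "u < lo v"
  proof (rule ccontr)
    assume "\<not> u < lo v"
    then have "child u = child v" using child_eqI[OF vX, of u] hv uv by simp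
    then show False using cuv by simp
  qed
  show "hi u < v"
  proof (rule ccontr)
    assume "\<not> hi u < v"
    then have "child v = child u" using child_eqI[OF uX, of v] lu uv by simp
    then show False using cuv by simp
  qed
qed

lemma good_run_adjacent_union:
  assumes bt: "boundary t" and pt: "common P (adjacent_union t)"
  shows "good_run (lo t) (hi (Suc t))"
  unfolding good_run_def
proof (intro conjI allI impI)
  note bf = boundary_facts[OF bt]
  have tX: "t \<in> X" "Suc t \<in> X" and ct: "child t \<noteq> child (Suc t)" using bt unfolding boundary_def by auto
  show "lo t \<in> X" "hi (Suc t) \<in> X" using lo_hi_mem tX by auto
  show "lo (lo t) = lo t" "hi (hi (Suc t)) = hi (Suc t)" using lo_lo hi_hi tX by auto
  show "lo t < hi (Suc t)" using bf by simp
  show "child (lo t) \<noteq> child (hi (Suc t))" using lo_hi_mem tX ct by simp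
  fix s assume s: "boundary s \<and> lo t \<le> s \<and> s < hi (Suc t)"
  consider "s < t" | "s = t" | "t < s" by linarith
  then show "common P (adjacent_union s)"
  proof cases
    case 1 then show ?thesis using no_boundary_in_child[OF tX(1), of s] s bf by simp
  next
    case 2 then show ?thesis using pt by simp
  next
    case 3 then show ?thesis using no_boundary_in_child[OF tX(2), of s] s bf by simp
  qed
qed

lemma good_run_right_tail:
  assumes G: "good_run u v" and F: "common P {f..g}" "{f..g} \<subseteq> X" "spans {f..g}"
    and h: "u < f" "f \<le> v" "v < g"
  shows "common P {lo v..g}"
proof -
  have vX: "v \<in> X" and adj: "\<forall>s. boundary s \<and> u \<le> s \<and> s < v \<longrightarrow> common P (adjacent_union s)"
    using G unfolding good_run_def by auto
  note R = good_run_facts[OF G]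
  have fX: "f \<in> X" using F(2) h by auto
  have lf: "lo f = f" using spans_bounds(1)[OF F, of f] child_atLeastAtMost(2)[OF fX] h by simp
  have "f \<le> lo v"
  proof (rule ccontr)
    assume "\<not> f \<le> lo v"
    then have "child f = child v" using child_eqI[OF vX, of f] h child_atLeastAtMost(3)[OF vX] by simp
    then have "lo f = lo v" unfolding lo_def by simp
    then show False using lf \<open>\<not> f \<le> lo v\<close> by simp
  qed
  show ?thesis
  proof (cases "f = lo v")
    case True then show ?thesis using F(1) by simp
  next
    case False
    then have fv: "f < lo v" using \<open>f \<le> lo v\<close> by simp
    define w where "w = f - 1"
    define z where "z = lo v - 1"
    have Sw: "Suc w = f" and Sz: "Suc z = lo v" using h fv w_def z_def by auto
    have wz: "u \<le> w" "w < z" "z < v" using h fv Sw Sz child_atLeastAtMost(2)[OF vX] by auto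
    have wX: "w \<in> X" and zX: "z \<in> X" using R(2) wz by auto
    have hz: "hi z = z" using boundary_facts(1)[OF boundary_pred_lo[OF vX zX Sz]] .
    have "u \<le> lo w" using spans_bounds(1)[OF R(1-3), of w] wz by simp
    then have "\<forall>s. boundary s \<and> lo w \<le> s \<and> s < z \<longrightarrow> common P (adjacent_union s)"
      using adj wz by auto
    moreover have "lo w \<le> w" using child_atLeastAtMost(2)[OF wX] .
    ultimately have "common P {lo w..z}"
      using common_run_if_adjacent_unions_common lo_hi_mem(1)[OF wX] zX lo_lo[OF wX] hz wz by simp
    moreover have "lo w < f" using \<open>lo w \<le> w\<close> Sw by simp
    ultimately have "common P {Suc z..g}" using common_crossing_pieces(3)[OF _ F(1)] wz h Sw by simp
    then show ?thesis using Sz by simp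
  qed
qed

lemma good_run_extend_right:
  assumes G: "good_run u v" and F: "common P {f..g}" "{f..g} \<subseteq> X" "spans {f..g}"
    and h: "u < f" "f \<le> v" "v < g"
  shows "good_run u (hi (Suc v))"
proof -
  have uX: "u \<in> X" and vX: "v \<in> X" and lu: "lo u = u" and hv: "hi v = v" and uv: "u < v"
    and adj: "\<forall>s. boundary s \<and> u \<le> s \<and> s < v \<longrightarrow> common P (adjacent_union s)"
    using G unfolding good_run_def by auto
  note R = good_run_facts[OF G]
  have SvX: "Suc v \<in> X" and gX: "g \<in> X" using F(2) h by auto
  have bv: "boundary v" using boundary_hi[OF vX] SvX hv by simp
  note bf = boundary_facts[OF bv]
  have sub: "{lo v..g} \<subseteq> X" using atLeastAtMost_subset_X lo_hi_mem(1)[OF vX] gX by blast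
  have "u \<notin> {lo v..g}" using R(4) by simp
  then have ne: "{lo v..g} \<noteq> X" using uX by blast
  have pv: "common P (adjacent_union v)"
    using adjacent_union_common_from_lo[OF bv _ good_run_right_tail[OF G F h] sub ne] h(3) by simp
  show ?thesis
    unfolding good_run_def
  proof (intro conjI allI impI)
    show "u \<in> X" "lo u = u" by fact+
    show "hi (Suc v) \<in> X" using lo_hi_mem(2)[OF SvX] .
    show "hi (hi (Suc v)) = hi (Suc v)" using hi_hi[OF SvX] .
    show "u < hi (Suc v)" using bf uv by simp
    have "Suc v \<notin> child u" using child_atLeastAtMost(1)[OF uX] R(5) by simp
    then show "child u \<noteq> child (hi (Suc v))" using lo_hi_mem(4)[OF SvX] child_mem[OF SvX] by auto
    fix s assume s: "boundary s \<and> u \<le> s \<and> s < hi (Suc v)"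
    consider "s < v" | "s = v" | "v < s" by linarith
    then show "common P (adjacent_union s)"
    proof cases
      case 1 then show ?thesis using adj s by blast
    next
      case 2 then show ?thesis using pv by simp
    next
      case 3 then show ?thesis using no_boundary_in_child[OF SvX, of s] bf s by simp
    qed
  qed
qed

lemma good_run_left_head:
  assumes G: "good_run u v" and F: "common P {f..g}" "{f..g} \<subseteq> X" "spans {f..g}"
    and h: "f < u" "u \<le> g" "g < v"
  shows "common P {f..hi u}"
proof -
  have uX: "u \<in> X" and lu: "lo u = u"
    and adj: "\<forall>s. boundary s \<and> u \<le> s \<and> s < v \<longrightarrow> common P (adjacent_union s)"
    using G unfolding good_run_def by auto
  note R = good_run_facts[OF G]
  have gX: "g \<in> X" using F(2) h by auto
  have hg: "hi g = g" using spans_bounds(2)[OF F, of g] child_atLeastAtMost(3)[OF gX] h by simp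
  have "hi u \<le> g"
  proof (rule ccontr)
    assume "\<not> hi u \<le> g"
    then have "child g = child u" using child_eqI[OF uX, of g] h lu by simp
    then have "hi g = hi u" unfolding hi_def by simp
    then show False using hg \<open>\<not> hi u \<le> g\<close> by simp
  qed
  show ?thesis
  proof (cases "g = hi u")
    case True then show ?thesis using F(1) by simp
  next
    case False
    then have gu: "hi u < g" using \<open>hi u \<le> g\<close> by simp
    have uhu: "u \<le> hi u" using child_atLeastAtMost(3)[OF uX] .
    have SgX: "Suc g \<in> X" and SuX: "Suc (hi u) \<in> X" using R(2) h gu uhu by auto
    have bu: "boundary (hi u)" using boundary_hi[OF uX SuX] .
    have bg: "boundary g" using boundary_hi[OF gX] hg SgX by simp
    have hSg: "hi (Suc g) \<le> v" using spans_bounds(2)[OF R(1-3), of "Suc g"] h by simp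
    have gSg: "Suc g \<le> hi (Suc g)" using boundary_facts(4)[OF bg] .
    have "\<forall>s. boundary s \<and> Suc (hi u) \<le> s \<and> s < hi (Suc g) \<longrightarrow> common P (adjacent_union s)"
      using adj uhu hSg by auto
    then have B: "common P {Suc (hi u)..hi (Suc g)}"
      using common_run_if_adjacent_unions_common SuX lo_hi_mem(2)[OF SgX] boundary_facts(2)[OF bu]
        hi_hi[OF SgX] gu gSg by simp
    have "common P {f..Suc (hi u) - 1}"
      using common_crossing_pieces(1)[OF F(1) B] h gu gSg uhu by simp
    then show ?thesis by simp
  qed
qed

lemma good_run_extend_left:
  assumes G: "good_run u v" and F: "common P {f..g}" "{f..g} \<subseteq> X" "spans {f..g}"
    and h: "f < u" "u \<le> g" "g < v"
  shows "good_run (lo (u - 1)) v"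
proof -
  have uX: "u \<in> X" and vX: "v \<in> X" and lu: "lo u = u" and hv: "hi v = v" and uv: "u < v"
    and adj: "\<forall>s. boundary s \<and> u \<le> s \<and> s < v \<longrightarrow> common P (adjacent_union s)"
    using G unfolding good_run_def by auto
  note R = good_run_facts[OF G]
  define w where "w = u - 1"
  have Sw: "Suc w = u" using h w_def by simp
  have fX: "f \<in> X" using F(2) h by auto
  have wX: "w \<in> X" using atLeastAtMost_subset_X[OF fX uX] h Sw by auto
  have bw: "boundary w" using boundary_pred_lo[OF uX wX] Sw lu by simp
  note bf = boundary_facts[OF bw]
  have sub: "{f..hi (Suc w)} \<subseteq> X" using atLeastAtMost_subset_X[OF fX] lo_hi_mem(2)[OF uX] Sw by simp
  have "v \<notin> {f..hi (Suc w)}" using R(5) Sw by simp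
  then have ne: "{f..hi (Suc w)} \<noteq> X" using vX by blast
  have "common P {f..hi (Suc w)}" using good_run_left_head[OF G F h] Sw by simp
  then have pw: "common P (adjacent_union w)"
    using adjacent_union_common_to_hi[OF bw _ _ sub ne] h Sw by simp
  have "good_run (lo w) v"
    unfolding good_run_def
  proof (intro conjI allI impI)
    show "v \<in> X" "hi v = v" by fact+
    show "lo w \<in> X" using lo_hi_mem(1)[OF wX] .
    show "lo (lo w) = lo w" using lo_lo[OF wX] .
    show "lo w < v" using bf Sw uv by simp
    have "w \<notin> child v" using child_atLeastAtMost(1)[OF vX] R(4) Sw by simp
    then show "child (lo w) \<noteq> child v" using lo_hi_mem(3)[OF wX] child_mem[OF wX] by auto
    fix s assume s: "boundary s \<and> lo w \<le> s \<and> s < v"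
    consider "u \<le> s" | "s = w" | "s < w" using Sw by linarith
    then show "common P (adjacent_union s)"
    proof cases
      case 1 then show ?thesis using adj s by blast
    next
      case 2 then show ?thesis using pw by simp
    next
      case 3 then show ?thesis using no_boundary_in_child[OF wX, of s] bf s by simp
    qed
  qed
  then show ?thesis using w_def by simp
qed

lemma ex_maximal_good_run:
  obtains u v where "good_run u v" "\<And>u' v'. good_run u' v' \<Longrightarrow> v' - u' \<le> v - u"
proof -
  obtain t0 where t0: "boundary t0" "common P (adjacent_union t0)"
    using ex_common_adjacent_union by blast
  have bound: "\<forall>p. case_prod good_run p \<longrightarrow> (\<lambda>(u, v). v - u) p < Suc (Max X)"
  proof (intro allI impI)
    fix p :: "nat \<times> nat" assume "case_prod good_run p"
    moreover obtain u v where "p = (u, v)" by (cases p)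
    ultimately have "v \<in> X" unfolding good_run_def by simp
    then show "(\<lambda>(u, v). v - u) p < Suc (Max X)"
      using Max_ge[OF common_finite[OF common_X]] \<open>p = (u, v)\<close> by fastforce
  qed
  have "case_prod good_run (lo t0, hi (Suc t0))" using good_run_adjacent_union[OF t0] by simp
  from ex_has_greatest_nat[OF this bound] obtain p where
    p: "case_prod good_run p" and pmax: "\<forall>y. case_prod good_run y \<longrightarrow> (\<lambda>(u, v). v - u) y \<le> (\<lambda>(u, v). v - u) p"
    by blast
  obtain u v where uv_p: "p = (u, v)" by (cases p)
  have "v' - u' \<le> v - u" if "good_run u' v'" for u' v'
    using pmax[rule_format, of "(u', v')"] that uv_p by simp
  then show ?thesis using that p uv_p by simp
qed

text \<open>A longest good run cannot be a proper part of X: it would be crossed by a common interval,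
  and the crossing extends it by one more child.\<close>
lemma adjacent_union_common:
  assumes bt: "boundary t" shows "common P (adjacent_union t)"
proof (rule ccontr)
  assume nc: "\<not> common P (adjacent_union t)"
  obtain u v where G: "good_run u v" and maximal: "\<And>u' v'. good_run u' v' \<Longrightarrow> v' - u' \<le> v - u"
    using ex_maximal_good_run by blast
  note R = good_run_facts[OF G]
  have uX: "u \<in> X" and uv: "u \<le> v" using G unfolding good_run_def by auto
  have "{u..v} \<noteq> X"
  proof
    assume "{u..v} = X"
    then have "u \<le> t" "t < v" using bt unfolding boundary_def by auto
    then show False using G nc bt unfolding good_run_def by blast
  qed
  then obtain f g where F: "common P {f..g}" "{f..g} \<subseteq> X" "spans {f..g}"
    and cr: "(f < u \<and> u \<le> g \<and> g < v) \<or> (u < f \<and> f \<le> v \<and> v < g)"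
    using crossing_interval[OF R(1,2) _ R(3) uv] by blast
  from cr show False
  proof
    assume h: "f < u \<and> u \<le> g \<and> g < v"
    have "f \<in> X" using F(2) h by auto
    then have "u - 1 \<in> X" using atLeastAtMost_subset_X[OF _ uX, of f] h by auto
    then have "lo (u - 1) < u" using child_atLeastAtMost(2)[of "u - 1"] h by linarith
    moreover have "v - lo (u - 1) \<le> v - u" using maximal good_run_extend_left[OF G F] h by blast
    ultimately show False using uv by linarith
  next
    assume h: "u < f \<and> f \<le> v \<and> v < g"
    have "Suc v \<in> X" using F(2) h by auto
    then have "v < hi (Suc v)" using child_atLeastAtMost(3)[of "Suc v"] by linarith
    moreover have "hi (Suc v) - u \<le> v - u" using maximal good_run_extend_right[OF G F] h by blast
    ultimately show False using uv by linarith
  qed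
qed

lemma common_run: "u \<in> X \<Longrightarrow> v \<in> X \<Longrightarrow> lo u = u \<Longrightarrow> hi v = v \<Longrightarrow> u \<le> v \<Longrightarrow> common P {u..v}"
  using common_run_if_adjacent_unions_common adjacent_union_common by blast

lemma common_Diff_end_children:
  assumes Y: "Y \<in> children P X" and Z: "Z \<in> children P X" and YZ: "Max Y < Min Z"
  shows "common P ({Min Y..Max Z} - Y)" "common P ({Min Y..Max Z} - Z)"
proof -
  have cYZ: "common P Y" "common P Z" using Y Z childD strong_common by blast+
  have Yiv: "Y = {Min Y..Max Y}" and Ziv: "Z = {Min Z..Max Z}"
    using common_eq_atLeastAtMost_Min_Max cYZ by blast+
  have mem: "Min Y \<in> Y" "Max Y \<in> Y" "Min Z \<in> Z" "Max Z \<in> Z"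
    using cYZ common_nonempty common_finite by auto
  have inX: "Min Y \<in> X" "Max Y \<in> X" "Min Z \<in> X" "Max Z \<in> X" using mem Y Z childD by blast+
  have ends: "lo (Min Y) = Min Y" "hi (Max Y) = Max Y" "lo (Min Z) = Min Z" "hi (Max Z) = Max Z"
    using lo_hi_of_child Y Z mem by blast+
  have order: "Min Y \<le> Max Y" "Min Z \<le> Max Z" using mem Yiv Ziv by auto
  have "Suc (Max Y) \<in> X" using atLeastAtMost_subset_X[OF inX(2,4)] YZ order by auto
  then have "lo (Suc (Max Y)) = Suc (Max Y)"
    using boundary_facts(2)[OF boundary_hi[OF inX(2)]] ends(2) by simp
  then have "common P {Suc (Max Y)..Max Z}"
    using common_run[OF \<open>Suc (Max Y) \<in> X\<close> inX(4) _ ends(4)] YZ order by simp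
  moreover have "{Min Y..Max Z} - {Min Y..Max Y} = {Suc (Max Y)..Max Z}" using order by auto
  ultimately show "common P ({Min Y..Max Z} - Y)" using Yiv by metis
  have Sz: "Suc (Min Z - 1) = lo (Min Z)" using YZ ends(3) by simp
  have "Min Z - 1 \<in> X" using atLeastAtMost_subset_X[OF inX(1,3)] YZ order by auto
  then have "hi (Min Z - 1) = Min Z - 1"
    using boundary_facts(1)[OF boundary_pred_lo[OF inX(3) _ Sz]] by simp
  then have "common P {Min Y..Min Z - 1}"
    using common_run[OF inX(1) \<open>Min Z - 1 \<in> X\<close> ends(1)] YZ order by simp
  moreover have "{Min Y..Max Z} - {Min Z..Max Z} = {Min Y..Min Z - 1}" using YZ order by auto
  ultimately show "common P ({Min Y..Max Z} - Z)" using Ziv by metis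
qed

lemma chain_of_children_ends:
  assumes xs: "set xs \<subseteq> children P X" "2 \<le> length xs"
    and chain: "\<forall>i. Suc i < length xs \<longrightarrow> Max (xs ! i) + 1 = Min (xs ! Suc i)"
    and I: "common P I" "\<Union>(set xs) = I"
  shows "strong P (hd xs)" "hd xs \<subseteq> I" "Min I \<in> hd xs" "common P (I - hd xs)"
    "strong P (last xs)" "last xs \<subseteq> I" "Max I \<in> last xs" "common P (I - last xs)"
    "hd xs \<inter> last xs = {}"
proof -
  have "xs \<noteq> []" using xs(2) by auto
  then have in_xs: "hd xs \<in> set xs" "last xs \<in> set xs" by simp_all
  then have ends: "hd xs \<in> children P X" "last xs \<in> children P X" using xs(1) by blast+
  then show "strong P (hd xs)" "strong P (last xs)" using childD by blast+
  show "hd xs \<subseteq> I" "last xs \<subseteq> I" using in_xs I(2) by blast+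
  have ne: "\<forall>Y\<in>set xs. Y \<noteq> {} \<and> finite Y"
    using xs(1) childD strong_common common_nonempty common_finite by blast
  have MinMax: "Min I = Min (hd xs)" "Max I = Max (last xs)"
    using Min_Max_Union_chain[OF ne \<open>xs \<noteq> []\<close> chain] I(2) by simp_all
  have fin: "finite (hd xs)" "finite (last xs)" and nonempty: "hd xs \<noteq> {}" "last xs \<noteq> {}"
    using ne in_xs by blast+
  show "Min I \<in> hd xs" "Max I \<in> last xs" using MinMax Min_in Max_in fin nonempty by simp_all
  have sep: "Max (hd xs) < Min (last xs)" using Max_hd_lt_Min_last_chain[OF ne xs(2) chain] .
  have "I = {Min (hd xs)..Max (last xs)}" using common_eq_atLeastAtMost_Min_Max[OF I(1)] MinMax by metis
  then show "common P (I - hd xs)" "common P (I - last xs)"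
    using common_Diff_end_children[OF ends sep] by simp_all
  have "x \<le> Max (hd xs)" "Min (last xs) \<le> x" if "x \<in> hd xs" "x \<in> last xs" for x
    using that fin by simp_all
  then show "hd xs \<inter> last xs = {}" using sep by fastforce
qed

end

section \<open>Domains of Q-intervals\<close>

context permutation_family begin

lemma least_strong_superset:
  assumes cI: "common P I"
  obtains X0 where "strong P X0" "I \<subseteq> X0" "\<And>Z. strong P Z \<Longrightarrow> I \<subseteq> Z \<Longrightarrow> X0 \<subseteq> Z"
proof -
  define T where "T = {Z. strong P Z \<and> I \<subseteq> Z}"
  have "{1..n} \<in> T" unfolding T_def using strong_range common_subset_range[OF cI] by simp
  then obtain X0 where X0: "X0 \<in> T" "\<And>Z. Z \<in> T \<Longrightarrow> card X0 \<le> card Z"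
    using ex_has_least_nat[of "\<lambda>Z. Z \<in> T" "{1..n}" card] by blast
  have sX0: "strong P X0" and IX0: "I \<subseteq> X0" using X0(1) unfolding T_def by auto
  have "X0 \<subseteq> Z" if Z: "strong P Z" "I \<subseteq> Z" for Z
  proof -
    have "X0 \<inter> Z \<noteq> {}" using IX0 Z(2) common_nonempty[OF cI] by blast
    then have "X0 \<subseteq> Z \<or> Z \<subset> X0" using strong_laminar[OF sX0 strong_common[OF Z(1)]] by blast
    moreover have "\<not> Z \<subset> X0"
    proof
      assume "Z \<subset> X0"
      then have "card Z < card X0" using psubset_card_mono common_finite[OF strong_common[OF sX0]] by blast
      then show False using X0(2)[of Z] Z unfolding T_def by simp
    qed
    ultimately show ?thesis by blast
  qed
  then show ?thesis using that sX0 IX0 by blast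
qed

lemma Union_children_within_least_strong_superset:
  assumes cI: "common P I" and ns: "\<not> strong P I"
    and X0: "strong P X0" "I \<subseteq> X0" "\<And>Z. strong P Z \<Longrightarrow> I \<subseteq> Z \<Longrightarrow> X0 \<subseteq> Z"
  shows "\<Union>{Y \<in> children P X0. Y \<subseteq> I} = I"
proof
  show "\<Union>{Y \<in> children P X0. Y \<subseteq> I} \<subseteq> I" by blast
  show "I \<subseteq> \<Union>{Y \<in> children P X0. Y \<subseteq> I}"
  proof
    fix x assume x: "x \<in> I"
    have "I \<noteq> X0" using ns X0(1) by blast
    then have "X0 \<noteq> {x}" using X0(2) x by blast
    then obtain Y where Y: "Y \<in> children P X0" "x \<in> Y" using child_containing[OF X0(1)] x X0(2) by blast
    have sY: "strong P Y" "Y \<subset> X0" using childD[OF Y(1)] by auto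
    have "Y \<subseteq> I \<or> I \<subseteq> Y" using strong_laminar[OF sY(1) cI] Y x by blast
    moreover have "\<not> I \<subseteq> Y" using X0(3)[OF sY(1)] sY(2) by blast
    ultimately show "x \<in> \<Union>{Y \<in> children P X0. Y \<subseteq> I}" using Y by blast
  qed
qed

lemma Qnode_least_strong_superset:
  assumes cI: "common P I" and ns: "\<not> strong P I"
    and X0: "strong P X0" "I \<subseteq> X0" "\<And>Z. strong P Z \<Longrightarrow> I \<subseteq> Z \<Longrightarrow> X0 \<subseteq> Z"
  shows "Qnode P X0" "{Y \<in> children P X0. Y \<subseteq> I} \<subset> children P X0"
    "2 \<le> card {Y \<in> children P X0. Y \<subseteq> I}"
proof -
  define D0 where "D0 = {Y \<in> children P X0. Y \<subseteq> I}"
  have U: "\<Union>D0 = I" unfolding D0_def by (rule Union_children_within_least_strong_superset[OF assms])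
  have "I \<noteq> {}" using common_nonempty[OF cI] .
  have "I \<noteq> X0" using ns X0(1) by blast
  then have "X0 \<noteq> {x}" for x using X0(2) \<open>I \<noteq> {}\<close> by blast
  then have "\<Union>(children P X0) = X0" using Union_children[OF X0(1)] by blast
  then have "D0 \<noteq> children P X0" using U \<open>I \<noteq> X0\<close> by (metis (no_types))
  then show D0_sub: "{Y \<in> children P X0. Y \<subseteq> I} \<subset> children P X0" unfolding D0_def by blast
  have fD0: "finite D0" using finite_children unfolding D0_def by simp
  have "card D0 \<noteq> 0" using fD0 U \<open>I \<noteq> {}\<close> by auto
  moreover have "card D0 \<noteq> 1"
  proof
    assume "card D0 = 1"
    then obtain Y where "D0 = {Y}" by (rule card_1_singletonE)
    then have "Y \<in> children P X0" "I = Y" using U unfolding D0_def by auto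
    then show False using ns childD by blast
  qed
  ultimately have card_D0: "2 \<le> card D0" by linarith
  then show "2 \<le> card {Y \<in> children P X0. Y \<subseteq> I}" unfolding D0_def .
  have "card D0 < card (children P X0)" using psubset_card_mono[OF finite_children] D0_sub D0_def by simp
  then show "Qnode P X0"
    unfolding Qnode_def Pnode_def using X0(1) D0_sub card_D0 U cI D0_def by auto
qed

lemma parent_eq_least_strong_superset:
  assumes cI: "common P I" and ns: "\<not> strong P I"
    and X0: "strong P X0" "I \<subseteq> X0" "\<And>Z. strong P Z \<Longrightarrow> I \<subseteq> Z \<Longrightarrow> X0 \<subseteq> Z"
    and X: "strong P X" "D \<subseteq> children P X" "\<Union>D = I"
  shows "X = X0"
proof (rule ccontr)
  assume "X \<noteq> X0"
  moreover have "X0 \<subseteq> X" using X0(3)[OF X(1)] X(2,3) childD by blast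
  ultimately have X0X: "X0 \<subset> X" by blast
  obtain x where x: "x \<in> I" using common_nonempty[OF cI] by blast
  have "X \<noteq> {y}" for y using X0X X0(2) x by blast
  then obtain Z where Z: "Z \<in> children P X" "x \<in> Z" using child_containing[OF X(1)] x X0X X0(2) by blast
  have "Z \<subseteq> X0 \<or> X0 \<subseteq> Z" using strong_laminar[OF _ strong_common[OF X0(1)]] childD[OF Z(1)] Z x X0(2) by blast
  moreover have "\<not> Z \<subset> X0" using child_minimal[OF Z(1) X0(1)] X0X by blast
  ultimately have IZ: "I \<subseteq> Z" using X0(2) by blast
  have "Y = Z" if "Y \<in> D" for Y
  proof -
    have "Y \<noteq> {}" using that X(2) childD strong_common common_nonempty by blast
    then have "Y \<inter> Z \<noteq> {}" using that X(3) IZ by blast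
    then show "Y = Z" using children_disjoint[of Y X Z] that X(2) Z(1) by blast
  qed
  then have "I = Z" using IZ X(3) x by blast
  then show False using ns childD[OF Z(1)] by simp
qed

lemma domain_nonstrong:
  assumes cI: "common P I" and ns: "\<not> strong P I"
    and X0: "strong P X0" "I \<subseteq> X0" "\<And>Z. strong P Z \<Longrightarrow> I \<subseteq> Z \<Longrightarrow> X0 \<subseteq> Z"
  shows "domain P I = {Y \<in> children P X0. Y \<subseteq> I}"
  unfolding domain_def if_not_P[OF ns]
proof (rule the_equality)
  have fI: "finite I" using common_finite[OF cI] .
  show "\<exists>X. Qnode P X \<and> {Y \<in> children P X0. Y \<subseteq> I} \<subseteq> children P X \<and> \<Union>{Y \<in> children P X0. Y \<subseteq> I} = I \<and>
      (\<forall>Y\<in>children P X. Min I \<le> Min Y \<and> Max Y \<le> Max I \<longrightarrow> Y \<in> {Y \<in> children P X0. Y \<subseteq> I})"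
  proof (intro exI[of _ X0] conjI ballI impI)
    show "Qnode P X0" using Qnode_least_strong_superset(1)[OF assms] .
    show "\<Union>{Y \<in> children P X0. Y \<subseteq> I} = I"
      using Union_children_within_least_strong_superset[OF assms] .
    fix Y assume Y: "Y \<in> children P X0" "Min I \<le> Min Y \<and> Max Y \<le> Max I"
    have "Y = {Min Y..Max Y}" using common_eq_atLeastAtMost_Min_Max childD[OF Y(1)] strong_common by blast
    moreover have "{Min Y..Max Y} \<subseteq> {Min I..Max I}" using Y(2) by auto
    ultimately have "Y \<subseteq> I" using common_eq_atLeastAtMost_Min_Max[OF cI] by metis
    then show "Y \<in> {Y \<in> children P X0. Y \<subseteq> I}" using Y(1) by blast
  qed auto
  fix D assume "\<exists>X. Qnode P X \<and> D \<subseteq> children P X \<and> \<Union>D = I \<and>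
      (\<forall>Y\<in>children P X. Min I \<le> Min Y \<and> Max Y \<le> Max I \<longrightarrow> Y \<in> D)"
  then obtain X where X: "Qnode P X" "D \<subseteq> children P X" "\<Union>D = I"
    "\<forall>Y\<in>children P X. Min I \<le> Min Y \<and> Max Y \<le> Max I \<longrightarrow> Y \<in> D" by blast
  have "X = X0" using parent_eq_least_strong_superset[OF assms QnodeD(1)[OF X(1)] X(2,3)] .
  show "D = {Y \<in> children P X0. Y \<subseteq> I}"
  proof
    show "D \<subseteq> {Y \<in> children P X0. Y \<subseteq> I}" using X(2,3) \<open>X = X0\<close> by blast
    show "{Y \<in> children P X0. Y \<subseteq> I} \<subseteq> D"
    proof
      fix Y assume "Y \<in> {Y \<in> children P X0. Y \<subseteq> I}"
      then have Y: "Y \<in> children P X" "Y \<subseteq> I" using \<open>X = X0\<close> by auto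
      have "Y \<noteq> {}" using childD[OF Y(1)] strong_common common_nonempty by blast
      then have "Min I \<le> Min Y" "Max Y \<le> Max I" using Min_antimono Max_mono fI Y(2) by auto
      then show "Y \<in> D" using X(4) Y(1) by blast
    qed
  qed
qed

lemma domain_Q_interval:
  assumes QI: "Q_interval P I"
  obtains X where "Qnode P X" "domain P I \<subseteq> children P X" "\<Union>(domain P I) = I" "2 \<le> card (domain P I)"
proof (cases "strong P I")
  case True
  then have QN: "Qnode P I" using QI unfolding Q_interval_def P_interval_def Qnode_def by simp
  have "domain P I = children P I" using True unfolding domain_def by simp
  moreover have "\<Union>(children P I) = I" using Union_children[OF True] Qnode_not_singleton[OF QN] by blast
  moreover have "2 \<le> card (children P I)" using QnodeD(2)[OF QN] by auto
  ultimately show ?thesis using that QN by simp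
next
  case False
  have cI: "common P I" using QI unfolding Q_interval_def by simp
  obtain X0 where X0: "strong P X0" "I \<subseteq> X0" "\<And>Z. strong P Z \<Longrightarrow> I \<subseteq> Z \<Longrightarrow> X0 \<subseteq> Z"
    using least_strong_superset[OF cI] by blast
  note facts = cI False X0
  show ?thesis
    using that[OF Qnode_least_strong_superset(1)[OF facts]] Qnode_least_strong_superset(2,3)[OF facts]
      Union_children_within_least_strong_superset[OF facts] domain_nonstrong[OF facts] by auto
qed

section \<open>Nesting through the end children\<close>

lemma nested_imp_remove_end:
  assumes cI: "common P I"
    and A: "strong P A" "A \<subseteq> I" "Min I \<in> A" and B: "strong P B" "B \<subseteq> I" "Max I \<in> B"
    and AB: "A \<inter> B = {}" and cA: "common P (I - A)" and cB: "common P (I - B)"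
    and nI: "nested P b I"
  shows "(small b A \<and> nested P b (I - A)) \<or> (small b B \<and> nested P b (I - B))"
  using nI
proof (cases rule: nested.cases)
  case single
  from \<open>card I = 1\<close> obtain a where "I = {a}" by (rule card_1_singletonE)
  then show ?thesis using A(3) B(3) AB by auto
next
  case (step J)
  have fI: "finite I" using common_finite[OF cI] .
  have cJ: "common P J" using nested_common[OF step(2)] .
  consider "J \<inter> A = {}" | "J \<inter> B = {}" | "J \<inter> A \<noteq> {}" "J \<inter> B \<noteq> {}" by blast
  then show ?thesis
  proof cases
    case 1
    then have "J \<subseteq> I - A" using step(3) by blast
    then show ?thesis using nested_Diff_if_disjoint[OF fI step(2) _ step(4) A(2) cA] by blast
  next
    case 2
    then have "J \<subseteq> I - B" using step(3) by blast
    then show ?thesis using nested_Diff_if_disjoint[OF fI step(2) _ step(4) B(2) cB] by blast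
  next
    case 3
    have "A \<subseteq> J \<or> J \<subseteq> A" using strong_laminar[OF A(1) cJ] 3 by blast
    then have "A \<subseteq> J" using 3 AB by blast
    have "B \<subseteq> J \<or> J \<subseteq> B" using strong_laminar[OF B(1) cJ] 3 by blast
    then have "B \<subseteq> J" using 3 AB by blast
    obtain j1 j2 where J: "J = {j1..j2}" using common_atLeastAtMostE[OF cJ] .
    have "Min I \<in> J" "Max I \<in> J" using A(3) B(3) \<open>A \<subseteq> J\<close> \<open>B \<subseteq> J\<close> by blast+
    then have "{Min I..Max I} \<subseteq> J" unfolding J by auto
    then have "I \<subseteq> J" using common_eq_atLeastAtMost_Min_Max[OF cI] by simp
    then show ?thesis using step(3) by blast
  qed
qed

lemma nested_iff_remove_ends:
  assumes cI: "common P I"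
    and A: "strong P A" "A \<subseteq> I" "Min I \<in> A" and B: "strong P B" "B \<subseteq> I" "Max I \<in> B"
    and AB: "A \<inter> B = {}" and cA: "common P (I - A)" and cB: "common P (I - B)"
  shows "nested P b I \<longleftrightarrow> (small b A \<and> nested P b (I - A)) \<or> (small b B \<and> nested P b (I - B))"
  using nested_imp_remove_end[OF assms] nested_if_Diff[OF cI common_finite[OF cI]] A(2,3) B(2,3)
  by blast

end

theorem lemma3:
  fixes n b :: nat and P :: "nat list list" and I :: "nat set" and xs :: "nat set list"
  assumes "n \<ge> 1" and "P \<noteq> []" and "hd P = [1..<n+1]"
    and "\<forall>p\<in>set P. distinct p \<and> set p = {1..n}"
    and "b > 0"
    and "Q_interval P I"
    and "set xs = domain P I" and "distinct xs"
    and "\<forall>i. Suc i < length xs \<longrightarrow> Max (xs ! i) + 1 = Min (xs ! Suc i)"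
  shows "nested P b I \<longleftrightarrow>
           (small b (hd xs) \<and> nested P b (I - hd xs)) \<or>
           (small b (last xs) \<and> nested P b (I - last xs))"
proof -
  interpret permutation_family n P using assms(1-4) by unfold_locales
  obtain X where X: "Qnode P X" "domain P I \<subseteq> children P X" "\<Union>(domain P I) = I" "2 \<le> card (domain P I)"
    using domain_Q_interval[OF assms(6)] by blast
  interpret Q_node n P X using X(1) by unfold_locales
  have cI: "common P I" using assms(6) unfolding Q_interval_def by simp
  have "set xs \<subseteq> children P X" "\<Union>(set xs) = I" "2 \<le> length xs"
    using X assms(7) distinct_card[OF assms(8)] by auto
  note ends = chain_of_children_ends[OF this(1,3) assms(9) cI this(2)]
  show ?thesis using nested_iff_remove_ends[OF cI ends(1-3,5-7,9,4,8)] .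
qed

end
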